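(* For $n>0$ define $f_n:\mathbb R\to\mathbb R$ by $f_n(x)=\left(1+\frac{x}{\sqrt n}\right)^n e^{-\sqrt n\,x}\,\mathbf 1_{[-\sqrt n,\infty)}(x)$. Then: (1) if $x\ge0$ and $l>n>0$, then $f_l(x)\le f_n(x)\le(2/\sqrt e)^n e^{-\sqrt n\,x/2}$; (2) if $x\le0$ and $l>n>0$, then $f_n(x)\le f_l(x)\le e^{-x^2/2}$; (3) $f_n(x)\to e^{-x^2/2}$ pointwise as $n\to\infty$. *)

theory Defs
  imports "HOL-Analysis.Analysis"
begin

definition fn :: "nat \<Rightarrow> real \<Rightarrow> real" where
  "fn n x = (1 + x / sqrt (real n)) ^ n * exp (- sqrt (real n) * x) * indicator {- sqrt (real n)..} x"

end

theory Submission
  imports Defs "HOL-Real_Asymp.Real_Asymp"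
begin

text \<open>
  Write \<open>s = sqrt n\<close>. For \<open>x > -s\<close> we have \<open>ln (fn n x) = s\<^sup>2 ln (1 + x/s) - s x\<close>,
  whose derivative in \<open>s\<close> is \<open>s g(x/s)\<close> with \<open>g u = 2 ln (1 + u) - u (2 + u) / (1 + u)\<close>.
  Since \<open>g' u = - (u / (1 + u))\<^sup>2\<close> and \<open>g 0 = 0\<close>, \<open>fn n x\<close> decreases in \<open>n\<close> for \<open>x \<ge> 0\<close>
  and increases for \<open>x \<le> 0\<close>. The exponential bound is the \<open>n\<close>-th power of
  \<open>(1 + t) exp (-t) \<le> 2 exp (-1/2) exp (-t/2)\<close> for \<open>t = x/s\<close>, an instance of \<open>1 + y \<le> exp y\<close>.
  For \<open>x \<le> 0\<close> the Gaussian bound follows from monotonicity in \<open>n\<close> and the pointwise limit.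
\<close>

lemma ln_one_plus_minus_rational_antimono:
  fixes a b :: real
  assumes "-1 < a" "a \<le> b"
  shows "2 * ln (1 + b) - b * (2 + b) / (1 + b) \<le> 2 * ln (1 + a) - a * (2 + a) / (1 + a)"
proof (rule DERIV_nonpos_imp_nonincreasing[of a b "\<lambda>u. 2 * ln (1 + u) - u * (2 + u) / (1 + u)"])
  fix u assume "a \<le> u" "u \<le> b"
  then have pos: "0 < 1 + u" using assms(1) by linarith
  have "((\<lambda>u. 2 * ln (1 + u) - u * (2 + u) / (1 + u)) has_real_derivative
          2 / (1 + u) - ((2 + 2 * u) * (1 + u) - u * (2 + u)) / (1 + u)\<^sup>2) (at u)"
    using pos by (auto intro!: derivative_eq_intros simp: power2_eq_square)
  moreover have "2 / (1 + u) - ((2 + 2 * u) * (1 + u) - u * (2 + u)) / (1 + u)\<^sup>2 = - (u / (1 + u))\<^sup>2"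
    using pos by (simp add: divide_simps) (simp add: algebra_simps power2_eq_square)
  ultimately show "\<exists>d. ((\<lambda>u. 2 * ln (1 + u) - u * (2 + u) / (1 + u)) has_real_derivative d) (at u) \<and> d \<le> 0"
    by fastforce
qed (fact assms(2))

lemma one_plus_mult_exp_minus_le: "(1 + t) * exp (- t) \<le> 2 / sqrt (exp 1) * exp (- t / 2)"
proof -
  have "1 + t \<le> 2 * exp ((t - 1) / 2)"
    using exp_ge_add_one_self[of "(t - 1) / 2"] by (simp add: field_simps)
  then have "(1 + t) * exp (- t) \<le> 2 * exp ((t - 1) / 2) * exp (- t)"
    by (simp add: mult_right_mono)
  also have "\<dots> = 2 / exp (1 / 2) * exp (- t / 2)"
    by (simp add: exp_add[symmetric] exp_diff[symmetric] field_simps)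
  also have "exp (1 / 2) = sqrt (exp 1)"
    by (rule real_sqrt_unique[symmetric]) (simp_all add: power2_eq_square flip: exp_add)
  finally show ?thesis .
qed

definition log_fn :: "real \<Rightarrow> real \<Rightarrow> real" where
  "log_fn x s = s\<^sup>2 * ln (1 + x / s) - s * x"

lemma fn_eq_exp_log_fn:
  assumes "0 < n" "- sqrt (real n) < x"
  shows "fn n x = exp (log_fn x (sqrt (real n)))"
proof -
  define s where "s = sqrt (real n)"
  have "0 < s" "s\<^sup>2 = real n" using assms(1) by (auto simp: s_def)
  then have "0 < 1 + x / s" using assms(2) by (simp add: s_def field_simps)
  then have "(1 + x / s) ^ n = exp (s\<^sup>2 * ln (1 + x / s))"
    by (simp add: \<open>s\<^sup>2 = real n\<close> ln_realpow[symmetric])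
  then show ?thesis
    using assms(2) by (simp add: fn_def log_fn_def exp_diff exp_minus divide_inverse flip: s_def)
qed

lemma has_real_derivative_log_fn:
  assumes "0 < s" "0 < s + x"
  shows "(log_fn x has_real_derivative
           s * (2 * ln (1 + x / s) - x / s * (2 + x / s) / (1 + x / s))) (at s)"
proof -
  define u where "u = x / s"
  have "x = s * u" "0 < 1 + u" using assms by (simp_all add: u_def field_simps)
  have "(log_fn x has_real_derivative
           2 * s * ln (1 + x / s) + s\<^sup>2 * (- x / s\<^sup>2 / (1 + x / s)) - x) (at s)"
    unfolding log_fn_def[abs_def] using assms \<open>0 < 1 + u\<close>
    by (auto intro!: derivative_eq_intros simp: power2_eq_square u_def)
  moreover have "2 * s * ln (1 + x / s) + s\<^sup>2 * (- x / s\<^sup>2 / (1 + x / s)) - x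
      = s * (2 * ln (1 + x / s) - x / s * (2 + x / s) / (1 + x / s))"
    using assms \<open>0 < 1 + u\<close> unfolding \<open>x = s * u\<close> by (simp add: field_simps power2_eq_square)
  ultimately show ?thesis by simp
qed

lemma log_fn_antimono:
  assumes "0 \<le> x" "0 < s" "s \<le> t"
  shows "log_fn x t \<le> log_fn x s"
proof (rule DERIV_nonpos_imp_nonincreasing[OF assms(3)])
  fix r assume "s \<le> r" "r \<le> t"
  then have "0 < r" "0 < r + x" "0 \<le> x / r" using assms by auto
  then have "2 * ln (1 + x / r) - x / r * (2 + x / r) / (1 + x / r) \<le> 0"
    using ln_one_plus_minus_rational_antimono[of 0 "x / r"] by simp
  then show "\<exists>d. (log_fn x has_real_derivative d) (at r) \<and> d \<le> 0"
    using has_real_derivative_log_fn[OF \<open>0 < r\<close> \<open>0 < r + x\<close>] \<open>0 < r\<close>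
    by (blast intro: mult_nonneg_nonpos order.strict_implies_order)
qed

lemma log_fn_mono:
  assumes "x \<le> 0" "0 < s + x" "s \<le> t"
  shows "log_fn x s \<le> log_fn x t"
proof (rule DERIV_nonneg_imp_nondecreasing[OF assms(3)])
  fix r assume "s \<le> r" "r \<le> t"
  then have "0 < r" "0 < r + x" using assms by auto
  then have "-1 < x / r" "x / r \<le> 0" using assms by (simp_all add: field_simps)
  then have "0 \<le> 2 * ln (1 + x / r) - x / r * (2 + x / r) / (1 + x / r)"
    using ln_one_plus_minus_rational_antimono[of "x / r" 0] by simp
  then show "\<exists>d. (log_fn x has_real_derivative d) (at r) \<and> 0 \<le> d"
    using has_real_derivative_log_fn[OF \<open>0 < r\<close> \<open>0 < r + x\<close>] \<open>0 < r\<close> by force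
qed

lemma fn_nonneg: "0 \<le> fn n x"
proof (cases "- sqrt (real n) \<le> x")
  case True
  then have "0 \<le> 1 + x / sqrt (real n)"
    by (cases "n = 0") (simp_all add: field_simps)
  then show ?thesis using True by (simp add: fn_def)
qed (simp add: fn_def)

lemma fn_eq_0:
  assumes "0 < n" "x \<le> - sqrt (real n)"
  shows "fn n x = 0"
proof (cases "x = - sqrt (real n)")
  case True
  then show ?thesis using assms(1) by (simp add: fn_def)
qed (use assms in \<open>simp add: fn_def\<close>)

lemma fn_antimono_nonneg:
  assumes "0 \<le> x" "0 < n" "n \<le> l"
  shows "fn l x \<le> fn n x"
proof -
  have "0 < sqrt (real n)" "sqrt (real n) \<le> sqrt (real l)" using assms by auto
  then have "log_fn x (sqrt (real l)) \<le> log_fn x (sqrt (real n))"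
    by (rule log_fn_antimono[OF assms(1)])
  moreover have "- sqrt (real n) < x" "- sqrt (real l) < x"
    using assms \<open>0 < sqrt (real n)\<close> \<open>sqrt (real n) \<le> sqrt (real l)\<close> by linarith+
  ultimately show ?thesis
    using assms by (simp add: fn_eq_exp_log_fn)
qed

lemma fn_mono_nonpos:
  assumes "x \<le> 0" "0 < n" "n \<le> l"
  shows "fn n x \<le> fn l x"
proof (cases "- sqrt (real n) < x")
  case True
  have "sqrt (real n) \<le> sqrt (real l)" using assms by simp
  then have "log_fn x (sqrt (real n)) \<le> log_fn x (sqrt (real l))"
    using assms(1) True by (intro log_fn_mono) simp_all
  moreover have "- sqrt (real l) < x"
    using True \<open>sqrt (real n) \<le> sqrt (real l)\<close> by linarith
  ultimately show ?thesis
    using assms True by (simp add: fn_eq_exp_log_fn)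
next
  case False
  then show ?thesis using assms fn_eq_0 fn_nonneg by simp
qed

lemma fn_le_exp_bound:
  assumes "0 \<le> x"
  shows "fn n x \<le> (2 / sqrt (exp 1)) ^ n * exp (- sqrt (real n) * x / 2)"
proof -
  define s where "s = sqrt (real n)"
  define t where "t = x / s"
  have "s * s = real n" by (simp add: s_def)
  then have "real n * t = s * x"
    by (cases "n = 0") (auto simp: s_def t_def field_simps)
  have "- s \<le> x"
    using assms by (simp add: s_def order_trans[of _ 0])
  then have "fn n x = (1 + t) ^ n * exp (- s * x)"
    by (simp add: fn_def s_def t_def)
  also have "\<dots> = ((1 + t) * exp (- t)) ^ n"
    by (simp add: power_mult_distrib flip: exp_of_nat_mult \<open>real n * t = s * x\<close>)
  also have "\<dots> \<le> (2 / sqrt (exp 1) * exp (- t / 2)) ^ n"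
    using assms by (intro power_mono one_plus_mult_exp_minus_le) (simp add: s_def t_def)
  also have "\<dots> = (2 / sqrt (exp 1)) ^ n * exp (- t / 2) ^ n"
    by (rule power_mult_distrib)
  also have "exp (- t / 2) ^ n = exp (- s * x / 2)"
    by (simp flip: exp_of_nat_mult \<open>real n * t = s * x\<close>)
  finally show ?thesis unfolding s_def .
qed

lemma tendsto_fn: "(\<lambda>n. fn n x) \<longlonglongrightarrow> exp (- x\<^sup>2 / 2)"
proof (rule Lim_transform_eventually)
  show "(\<lambda>n. (1 + x / sqrt (real n)) ^ n * exp (- sqrt (real n) * x)) \<longlonglongrightarrow> exp (- x\<^sup>2 / 2)"
  proof (cases x "0 :: real" rule: linorder_cases)
    case less
    then show ?thesis by (real_asymp simp: power2_eq_square)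
  next
    case greater
    then show ?thesis by (real_asymp simp: power2_eq_square)
  qed simp
  have "\<forall>\<^sub>F n in sequentially. - sqrt (real n) \<le> x"
    by real_asymp
  then show "\<forall>\<^sub>F n in sequentially. (1 + x / sqrt (real n)) ^ n * exp (- sqrt (real n) * x) = fn n x"
    by eventually_elim (simp add: fn_def)
qed

lemma fn_le_gaussian:
  assumes "x \<le> 0" "0 < n"
  shows "fn n x \<le> exp (- x\<^sup>2 / 2)"
  using tendsto_fn
  by (rule LIMSEQ_le_const) (use assms fn_mono_nonpos in blast)

theorem lemma3p7:
  shows "(\<forall>(x::real) (l::nat) (n::nat). x \<ge> 0 \<and> l > n \<and> n > 0 \<longrightarrow>
            fn l x \<le> fn n x \<and> fn n x \<le> (2 / sqrt (exp 1)) ^ n * exp (- sqrt (real n) * x / 2))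
       \<and> (\<forall>(x::real) (l::nat) (n::nat). x \<le> 0 \<and> l > n \<and> n > 0 \<longrightarrow>
            fn n x \<le> fn l x \<and> fn l x \<le> exp (- x\<^sup>2 / 2))
       \<and> (\<forall>x::real. (\<lambda>n. fn n x) \<longlonglongrightarrow> exp (- x\<^sup>2 / 2))"
proof (intro conjI allI impI)
  fix x :: real and l n :: nat
  assume "0 \<le> x \<and> n < l \<and> 0 < n"
  then show "fn l x \<le> fn n x" "fn n x \<le> (2 / sqrt (exp 1)) ^ n * exp (- sqrt (real n) * x / 2)"
    by (blast intro: fn_antimono_nonneg fn_le_exp_bound less_imp_le)+
next
  fix x :: real and l n :: nat
  assume "x \<le> 0 \<and> n < l \<and> 0 < n"
  then show "fn n x \<le> fn l x" "fn l x \<le> exp (- x\<^sup>2 / 2)"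
    by (blast intro: fn_mono_nonpos fn_le_gaussian less_imp_le less_trans)+
qed (rule tendsto_fn)

end
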